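(* Let $\alpha \in (0, \tfrac{1}{2}\pi)$ and put $\kappa = \sin \alpha$. Then $$\tfrac{1}{2} \pi \,_2F_1 (\tfrac{1}{3}, \tfrac{2}{3}; 1; \kappa^2) = \sqrt6 \int_{\cos \frac{1}{3} (\pi + \alpha)}^{\cos \frac{1}{3} (\pi - \alpha)} \frac{1}{\sqrt{T_6 (x) - \cos 2 \alpha}} \, {\rm d} x .$$
   Context: $\,_2F_1$ denotes the Gauss hypergeometric function. $T_6$ is the degree six Chebyshev polynomial of the first kind, so that $T_6(\cos t) = \cos 6t$. *)

theory Defs
  imports "HOL-Analysis.Analysis"
begin

text \<open>Gauss hypergeometric function as its power series
  (convergent for abs z < 1, which is the only case used).\<close>
definition hyp2F1 :: "real \<Rightarrow> real \<Rightarrow> real \<Rightarrow> real \<Rightarrow> real" where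
  "hyp2F1 a b c z =
     (\<Sum>n. pochhammer a n * pochhammer b n / (pochhammer c n * fact n) * z ^ n)"

text \<open>Chebyshev polynomial of the first kind of degree six, T6 (cos t) = cos (6 t).\<close>
definition cheb6 :: "real \<Rightarrow> real" where
  "cheb6 x = 32 * x ^ 6 - 48 * x ^ 4 + 18 * x ^ 2 - 1"

end

(*
  cos (c * arcsin z) / sqrt (1 - z^2) is the power series in z with coefficients
  a_(k+2) = ((k+1)^2 - c^2) / ((k+1) (k+2)) a_k, as both solve the same second order ODE;
  for c = 1/3 it is 2F1(1/3, 2/3; 1/2; z^2).
  Integrating it at z = kappa sin phi termwise over [-pi/2, pi/2], the Wallis integrals of
  sin^(2n) turn the 1/2 into a 1, so the integral equals pi 2F1(1/3, 2/3; 1; kappa^2).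

  On the other side, the substitution x = cos ((pi - theta) / 3) with sin theta = kappa sin phi
  maps [-pi/2, pi/2] onto the interval of integration and gives T6(x) - cos (2 alpha) =
  2 kappa^2 cos^2 phi, so the integral becomes that of
  sin ((pi - theta) / 3) / (3 sqrt 2 sqrt (1 - kappa^2 sin^2 phi)).  Expanding
  sin ((pi - theta) / 3) = sqrt 3 / 2 cos (theta / 3) - 1/2 sin (theta / 3), the second term is
  odd in phi and integrates to zero, and the first is sqrt 3 / 2 times the series above.
*)
theory Submission
  imports Defs
begin

fun cos_arcsin_coeff :: "real \<Rightarrow> nat \<Rightarrow> real" where
  "cos_arcsin_coeff c 0 = 1"
| "cos_arcsin_coeff c (Suc 0) = 0"
| "cos_arcsin_coeff c (Suc (Suc k)) =
     ((real k + 1)\<^sup>2 - c\<^sup>2) / ((real k + 1) * (real k + 2)) * cos_arcsin_coeff c k"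

lemma cos_arcsin_coeff_bounds:
  "c\<^sup>2 \<le> 1 \<Longrightarrow> 0 \<le> cos_arcsin_coeff c k \<and> cos_arcsin_coeff c k \<le> 1"
proof (induction c k rule: cos_arcsin_coeff.induct)
  case (3 c k)
  have "1 \<le> (real k + 1)\<^sup>2" by (simp add: one_le_power)
  then have "0 \<le> (real k + 1)\<^sup>2 - c\<^sup>2" using "3.prems" by linarith
  moreover have "(real k + 1)\<^sup>2 - c\<^sup>2 \<le> (real k + 1) * (real k + 2)"
    by (simp add: power2_eq_square algebra_simps)
  ultimately have "0 \<le> ((real k + 1)\<^sup>2 - c\<^sup>2) / ((real k + 1) * (real k + 2))"
    "((real k + 1)\<^sup>2 - c\<^sup>2) / ((real k + 1) * (real k + 2)) \<le> 1"
    by simp_all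
  with "3.IH" "3.prems" show ?case
    unfolding cos_arcsin_coeff.simps by (intro conjI mult_nonneg_nonneg mult_le_one) auto
qed simp_all

lemma cos_arcsin_coeff_odd: "cos_arcsin_coeff c (Suc (2 * n)) = 0"
  by (induction n) simp_all

lemma cos_arcsin_coeff_even:
  "cos_arcsin_coeff c (2 * n) =
     pochhammer ((1 - c) / 2) n * pochhammer ((1 + c) / 2) n / (pochhammer (1/2) n * fact n)"
proof (induction n)
  case (Suc n)
  have "2 * Suc n = Suc (Suc (2 * n))" by simp
  then have step: "cos_arcsin_coeff c (2 * Suc n) =
      ((real (2 * n) + 1)\<^sup>2 - c\<^sup>2) / ((real (2 * n) + 1) * (real (2 * n) + 2))
      * cos_arcsin_coeff c (2 * n)"
    by (simp only: cos_arcsin_coeff.simps)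
  have "(real (2 * n) + 1)\<^sup>2 - c\<^sup>2 = 4 * ((real n + (1 - c) / 2) * (real n + (1 + c) / 2))"
    "(real (2 * n) + 1) * (real (2 * n) + 2) = 4 * ((real n + 1/2) * (real n + 1))"
    by (simp_all add: power2_eq_square field_simps)
  then have ratio: "((real (2 * n) + 1)\<^sup>2 - c\<^sup>2) / ((real (2 * n) + 1) * (real (2 * n) + 2)) =
      (real n + (1 - c) / 2) * (real n + (1 + c) / 2) / ((real n + 1/2) * (real n + 1))"
    by simp
  have "pochhammer (1/2) n > (0::real)" "fact n > (0::real)" by (simp_all add: pochhammer_pos)
  then show ?case
    unfolding step ratio Suc.IH by (simp add: pochhammer_Suc field_simps)
qed simp

definition real_powser :: "(nat \<Rightarrow> real) \<Rightarrow> real \<Rightarrow> real" where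
  "real_powser a z = (\<Sum>k. a k * z ^ k)"

lemma summable_real_powser_bounded:
  fixes a :: "nat \<Rightarrow> real"
  assumes "\<And>k. \<bar>a k\<bar> \<le> B" and "\<bar>z\<bar> < 1"
  shows "summable (\<lambda>k. a k * z ^ k)"
proof (rule summable_comparison_test[of _ "\<lambda>k. B * \<bar>z\<bar> ^ k"])
  show "\<exists>N. \<forall>k\<ge>N. norm (a k * z ^ k) \<le> B * \<bar>z\<bar> ^ k"
    using assms(1) by (auto simp: abs_mult power_abs intro!: mult_right_mono)
  show "summable (\<lambda>k. B * \<bar>z\<bar> ^ k)"
    using assms(2) by (simp add: summable_geometric)
qed

lemma summable_real_powser_diffs:
  fixes a :: "nat \<Rightarrow> real"
  assumes "\<And>z. \<bar>z\<bar> < 1 \<Longrightarrow> summable (\<lambda>k. a k * z ^ k)" and "\<bar>z\<bar> < 1"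
  shows "summable (\<lambda>k. diffs a k * z ^ k)"
  by (rule termdiff_converges[where K = 1]) (use assms in auto)

lemma has_field_derivative_real_powser:
  fixes a :: "nat \<Rightarrow> real"
  assumes "\<And>z. \<bar>z\<bar> < 1 \<Longrightarrow> summable (\<lambda>k. a k * z ^ k)" and "\<bar>z\<bar> < 1"
  shows "(real_powser a has_field_derivative real_powser (diffs a) z) (at z)"
  unfolding real_powser_def[abs_def] using assms by (intro termdiffs_strong'[where K = 1]) auto

lemma sums_mult_real_powser_diffs:
  assumes "summable (\<lambda>k. diffs a k * z ^ k)"
  shows "(\<lambda>k. real k * a k * z ^ k) sums (z * real_powser (diffs a) z)"
proof -
  have "(\<lambda>k. z * (diffs a k * z ^ k)) sums (z * real_powser (diffs a) z)"
    using assms by (intro sums_mult) (simp add: real_powser_def summable_sums)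
  then have "(\<lambda>k. real (k + 1) * a (k + 1) * z ^ (k + 1)) sums (z * real_powser (diffs a) z)"
    by (simp add: diffs_def algebra_simps)
  then show ?thesis by (subst (asm) sums_zero_iff_shift) simp_all
qed

lemma sums_mult_real_powser_diffs_diffs:
  assumes "summable (\<lambda>k. diffs (diffs a) k * z ^ k)"
  shows "(\<lambda>k. real k * (real k - 1) * a k * z ^ k) sums (z\<^sup>2 * real_powser (diffs (diffs a)) z)"
proof -
  have "(\<lambda>k. z\<^sup>2 * (diffs (diffs a) k * z ^ k)) sums (z\<^sup>2 * real_powser (diffs (diffs a)) z)"
    using assms by (intro sums_mult) (simp add: real_powser_def summable_sums)
  moreover have "(\<lambda>k. z\<^sup>2 * (diffs (diffs a) k * z ^ k)) =
      (\<lambda>k. real (k + 2) * (real (k + 2) - 1) * a (k + 2) * z ^ (k + 2))"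
    by (simp add: diffs_def power_add power2_eq_square algebra_simps)
  ultimately have "(\<lambda>k. real (k + 2) * (real (k + 2) - 1) * a (k + 2) * z ^ (k + 2))
      sums (z\<^sup>2 * real_powser (diffs (diffs a)) z)"
    by simp
  then show ?thesis by (subst (asm) sums_zero_iff_shift) (auto simp: less_2_cases_iff)
qed

lemma diffs_diffs_cos_arcsin_coeff:
  "diffs (diffs (cos_arcsin_coeff c)) k = ((real k + 1)\<^sup>2 - c\<^sup>2) * cos_arcsin_coeff c k"
proof -
  have "diffs (diffs (cos_arcsin_coeff c)) k
      = (real k + 1) * (real k + 2) * cos_arcsin_coeff c (Suc (Suc k))"
    by (simp add: diffs_def algebra_simps del: cos_arcsin_coeff.simps)
  also have "\<dots> = ((real k + 1)\<^sup>2 - c\<^sup>2) * cos_arcsin_coeff c k"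
    by (simp only: cos_arcsin_coeff.simps) (simp del: of_nat_Suc)
  finally show ?thesis .
qed

lemma summable_cos_arcsin_coeff:
  "c\<^sup>2 \<le> 1 \<Longrightarrow> \<bar>z\<bar> < 1 \<Longrightarrow> summable (\<lambda>k. cos_arcsin_coeff c k * z ^ k)"
  using cos_arcsin_coeff_bounds by (intro summable_real_powser_bounded[where B = 1]) auto

lemma cos_arcsin_powser_ode:
  fixes c z :: real
  defines "a \<equiv> cos_arcsin_coeff c"
  assumes "c\<^sup>2 \<le> 1" and "\<bar>z\<bar> < 1"
  shows "(1 - z\<^sup>2) * real_powser (diffs (diffs a)) z - 3 * z * real_powser (diffs a) z
           + (c\<^sup>2 - 1) * real_powser a z = 0"
proof -
  have sa: "\<And>w. \<bar>w\<bar> < 1 \<Longrightarrow> summable (\<lambda>k. a k * w ^ k)"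
    unfolding a_def using assms(2) by (rule summable_cos_arcsin_coeff)
  have s1: "\<And>w. \<bar>w\<bar> < 1 \<Longrightarrow> summable (\<lambda>k. diffs a k * w ^ k)"
    using sa by (rule summable_real_powser_diffs)
  have s2: "summable (\<lambda>k. diffs (diffs a) k * z ^ k)"
    using s1 assms(3) by (rule summable_real_powser_diffs)
  have "(\<lambda>k. diffs (diffs a) k * z ^ k - real k * (real k - 1) * a k * z ^ k
            - 3 * (real k * a k * z ^ k) + (c\<^sup>2 - 1) * (a k * z ^ k))
        sums (real_powser (diffs (diffs a)) z - z\<^sup>2 * real_powser (diffs (diffs a)) z
              - 3 * (z * real_powser (diffs a) z) + (c\<^sup>2 - 1) * real_powser a z)"
    using s2 s1[OF assms(3)] sa[OF assms(3)]
    by (intro sums_add sums_diff sums_mult sums_mult_real_powser_diffs_diffs sums_mult_real_powser_diffs)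
      (simp_all add: real_powser_def summable_sums)
  moreover have "diffs (diffs a) k * z ^ k - real k * (real k - 1) * a k * z ^ k
      - 3 * (real k * a k * z ^ k) + (c\<^sup>2 - 1) * (a k * z ^ k) = 0" for k
    unfolding a_def diffs_diffs_cos_arcsin_coeff by (simp add: power2_eq_square) algebra
  ultimately have "(\<lambda>k. 0) sums (real_powser (diffs (diffs a)) z - z\<^sup>2 * real_powser (diffs (diffs a)) z
      - 3 * (z * real_powser (diffs a) z) + (c\<^sup>2 - 1) * real_powser a z)"
    by simp
  from sums_unique2[OF this sums_zero] show ?thesis
    by (simp add: algebra_simps)
qed

lemma abs_sin_less_one:
  assumes "\<bar>t\<bar> < pi / 2"
  shows "\<bar>sin t\<bar> < 1"
proof -
  have "0 < cos t"
    using assms by (intro cos_gt_zero_pi) (auto simp: abs_less_iff)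
  then have "(sin t)\<^sup>2 < 1"
    by (simp add: sin_squared_eq)
  then show ?thesis
    by (simp add: abs_square_less_1)
qed

lemma cos_arcsin_powser_sin:
  assumes "c \<noteq> 0" and "c\<^sup>2 \<le> 1" and "\<bar>t\<bar> < pi / 2"
  shows "real_powser (cos_arcsin_coeff c) (sin t) * cos t = cos (c * t)"
proof -
  define a where "a = cos_arcsin_coeff c"
  define S where "S = real_powser a"
  define S' where "S' = real_powser (diffs a)"
  define S'' where "S'' = real_powser (diffs (diffs a))"
  define u where "u \<theta> = S (sin \<theta>) * cos \<theta>" for \<theta>
  define w where "w \<theta> = S' (sin \<theta>) * (cos \<theta>)\<^sup>2 - S (sin \<theta>) * sin \<theta>" for \<theta>
  have sa: "\<And>z. \<bar>z\<bar> < 1 \<Longrightarrow> summable (\<lambda>k. a k * z ^ k)"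
    unfolding a_def using assms(2) by (rule summable_cos_arcsin_coeff)
  have sa': "\<And>z. \<bar>z\<bar> < 1 \<Longrightarrow> summable (\<lambda>k. diffs a k * z ^ k)"
    using sa by (rule summable_real_powser_diffs)
  have dS: "((\<lambda>\<theta>. S (sin \<theta>)) has_real_derivative S' (sin \<theta>) * cos \<theta>) (at \<theta>)"
    and dS': "((\<lambda>\<theta>. S' (sin \<theta>)) has_real_derivative S'' (sin \<theta>) * cos \<theta>) (at \<theta>)"
    if "\<bar>\<theta>\<bar> < pi / 2" for \<theta>
    using that unfolding S_def S'_def S''_def
    by (auto intro!: DERIV_chain2[OF has_field_derivative_real_powser DERIV_sin]
        sa sa' abs_sin_less_one)
  have du: "(u has_real_derivative w \<theta>) (at \<theta>)" if "\<bar>\<theta>\<bar> < pi / 2" for \<theta>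
    unfolding u_def[abs_def]
    by (rule DERIV_cong[OF DERIV_mult[OF dS[OF that] DERIV_cos]])
      (simp add: w_def power2_eq_square)
  have dw: "(w has_real_derivative - c\<^sup>2 * u \<theta>) (at \<theta>)" if "\<bar>\<theta>\<bar> < pi / 2" for \<theta>
  proof -
    have "(1 - (sin \<theta>)\<^sup>2) * S'' (sin \<theta>) - 3 * sin \<theta> * S' (sin \<theta>)
        + (c\<^sup>2 - 1) * S (sin \<theta>) = 0"
      unfolding S_def S'_def S''_def a_def
      using assms(2) abs_sin_less_one[OF that] by (rule cos_arcsin_powser_ode)
    then have ode:
      "S'' (sin \<theta>) * (cos \<theta>)\<^sup>2 = 3 * sin \<theta> * S' (sin \<theta>) + (1 - c\<^sup>2) * S (sin \<theta>)"
      by (simp add: cos_squared_eq algebra_simps)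
    show ?thesis
      unfolding w_def[abs_def]
      by (rule DERIV_cong[OF DERIV_diff[OF DERIV_mult[OF dS'[OF that] DERIV_power[OF DERIV_cos]]
            DERIV_mult[OF dS[OF that] DERIV_sin]]])
        (use ode in \<open>simp add: u_def power2_eq_square algebra_simps, algebra\<close>)
  qed
  \<comment> \<open>u solves u'' = - c^2 u with u' = w, u 0 = 1 and w 0 = 0, so the energy E of
    u - cos (c t) is conserved and vanishes at 0.\<close>
  define E where
    "E \<theta> = (w \<theta> + c * sin (c * \<theta>))\<^sup>2 + (c * (u \<theta> - cos (c * \<theta>)))\<^sup>2" for \<theta>
  have "(E has_real_derivative 0) (at \<theta>)" if "\<bar>\<theta>\<bar> < pi / 2" for \<theta>
    unfolding E_def[abs_def]
    by (auto intro!: derivative_eq_intros du[OF that] dw[OF that] simp: power2_eq_square algebra_simps)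
  then have "E t = E 0"
    using assms(3) by (intro DERIV_isconst3[of "-(pi/2)" "pi/2"]) auto
  also have "E 0 = 0"
    by (simp add: E_def u_def w_def S_def S'_def real_powser_def diffs_def a_def)
  finally have "c * (u t - cos (c * t)) = 0"
    unfolding E_def by (simp only: sum_power2_eq_zero_iff)
  then show ?thesis
    using assms(1) by (simp add: u_def S_def a_def)
qed

lemma cos_arcsin_powser:
  assumes "c \<noteq> 0" and "c\<^sup>2 \<le> 1" and "\<bar>z\<bar> < 1"
  shows "real_powser (cos_arcsin_coeff c) z = cos (c * arcsin z) / sqrt (1 - z\<^sup>2)"
proof -
  have "\<bar>arcsin z\<bar> < pi / 2"
    using arcsin_lt_bounded[of z] assms(3) by (auto simp: abs_less_iff)
  from cos_arcsin_powser_sin[OF assms(1,2) this]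
  have "real_powser (cos_arcsin_coeff c) z * sqrt (1 - z\<^sup>2) = cos (c * arcsin z)"
    using assms(3) by (simp add: cos_arcsin)
  moreover have "0 < sqrt (1 - z\<^sup>2)"
    using assms(3) by (simp add: abs_square_less_1)
  ultimately show ?thesis
    by (simp add: eq_divide_eq)
qed

lemma abs_mult_sin_le:
  fixes \<kappa> \<phi> :: real
  shows "\<bar>\<kappa> * sin \<phi>\<bar> \<le> \<bar>\<kappa>\<bar>"
  unfolding abs_mult by (rule mult_left_le) (simp_all add: abs_sin_le_one)

lemma integral_sin_power_Suc_Suc:
  "integral {-(pi/2)..pi/2} (\<lambda>\<phi>. sin \<phi> ^ Suc (Suc k))
     = (real k + 1) / (real k + 2) * integral {-(pi/2)..pi/2} (\<lambda>\<phi>. sin \<phi> ^ k)"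
proof -
  define F :: "real \<Rightarrow> real" where "F \<phi> = sin \<phi> ^ Suc k * cos \<phi>" for \<phi>
  define f :: "real \<Rightarrow> real"
    where "f \<phi> = (real k + 1) * sin \<phi> ^ k - (real k + 2) * sin \<phi> ^ Suc (Suc k)" for \<phi>
  have "(F has_real_derivative f \<phi>) (at \<phi>)" for \<phi>
  proof -
    have "\<forall>X. (1 + real k) * (cos \<phi> * X) * cos \<phi> - sin \<phi> * (sin \<phi> * X)
        = (real k + 1) * X - (real k + 2) * (sin \<phi> * (sin \<phi> * X))"
      using sin_cos_squared_add[of \<phi>] by algebra
    then show ?thesis
      unfolding F_def[abs_def] f_def
      by (intro DERIV_cong[OF DERIV_mult[OF DERIV_power[OF DERIV_sin] DERIV_cos]]) simp
  qed
  then have "(f has_integral F (pi/2) - F (-(pi/2))) {-(pi/2)..pi/2}"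
    by (intro fundamental_theorem_of_calculus)
      (auto simp: has_real_derivative_iff_has_vector_derivative[symmetric] intro: has_field_derivative_at_within)
  then have "(f has_integral 0) {-(pi/2)..pi/2}"
    by (simp add: F_def)
  moreover have "(f has_integral (real k + 1) * integral {-(pi/2)..pi/2} (\<lambda>\<phi>. sin \<phi> ^ k)
      - (real k + 2) * integral {-(pi/2)..pi/2} (\<lambda>\<phi>. sin \<phi> ^ Suc (Suc k))) {-(pi/2)..pi/2}"
    unfolding f_def[abs_def]
    by (intro has_integral_diff has_integral_mult_right integrable_integral
        integrable_continuous_interval continuous_intros)
  ultimately have "(real k + 1) * integral {-(pi/2)..pi/2} (\<lambda>\<phi>. sin \<phi> ^ k)
      - (real k + 2) * integral {-(pi/2)..pi/2} (\<lambda>\<phi>. sin \<phi> ^ Suc (Suc k)) = 0"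
    by (rule has_integral_unique[rotated])
  moreover have "real k + 2 \<noteq> 0" by linarith
  ultimately show ?thesis
    by (simp add: field_simps)
qed

lemma integral_sin_power_even:
  "integral {-(pi/2)..pi/2} (\<lambda>\<phi>. sin \<phi> ^ (2 * n)) = pi * pochhammer (1/2) n / fact n"
proof (induction n)
  case (Suc n)
  have "2 * Suc n = Suc (Suc (2 * n))" by simp
  moreover have "(real (2 * n) + 1) / (real (2 * n) + 2) = (real n + 1/2) / (real n + 1)"
    using mult_divide_mult_cancel_left[of 2 "real n + 1/2" "real n + 1"] by (simp add: algebra_simps)
  ultimately show ?case
    by (simp only: integral_sin_power_Suc_Suc Suc.IH) (simp add: pochhammer_Suc field_simps)
qed simp

lemma integral_real_powser_sin_sums:
  fixes a :: "nat \<Rightarrow> real"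
  assumes a: "\<And>k. \<bar>a k\<bar> \<le> 1" and \<kappa>: "\<bar>\<kappa>\<bar> < 1"
  shows "(\<lambda>k. a k * \<kappa> ^ k * integral {s..t} (\<lambda>\<phi>. sin \<phi> ^ k))
           sums integral {s..t} (\<lambda>\<phi>. real_powser a (\<kappa> * sin \<phi>))"
proof -
  define f where "f N \<phi> = (\<Sum>k<N. a k * (\<kappa> * sin \<phi>) ^ k)" for N \<phi>
  have "\<bar>f N \<phi>\<bar> \<le> 1 / (1 - \<bar>\<kappa>\<bar>)" for N \<phi>
  proof -
    have "\<bar>f N \<phi>\<bar> \<le> (\<Sum>k<N. \<bar>\<kappa>\<bar> ^ k)"
      unfolding f_def
    proof (rule order_trans[OF sum_abs sum_mono])
      fix k
      have "\<bar>a k * (\<kappa> * sin \<phi>) ^ k\<bar> = \<bar>a k\<bar> * (\<bar>\<kappa>\<bar> ^ k * \<bar>sin \<phi>\<bar> ^ k)"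
        by (simp add: abs_mult power_abs power_mult_distrib)
      also have "\<dots> \<le> 1 * (\<bar>\<kappa>\<bar> ^ k * 1)"
        using a by (intro mult_mono) (auto intro!: power_le_one)
      finally show "\<bar>a k * (\<kappa> * sin \<phi>) ^ k\<bar> \<le> \<bar>\<kappa>\<bar> ^ k" by simp
    qed
    also have "\<dots> \<le> (\<Sum>k. \<bar>\<kappa>\<bar> ^ k)"
      using \<kappa> by (intro sum_le_suminf) (auto simp: summable_geometric)
    also have "\<dots> = 1 / (1 - \<bar>\<kappa>\<bar>)"
      using \<kappa> by (simp add: suminf_geometric)
    finally show ?thesis .
  qed
  moreover have "(\<lambda>N. f N \<phi>) \<longlonglongrightarrow> real_powser a (\<kappa> * sin \<phi>)" for \<phi>
  proof -
    have "\<bar>\<kappa> * sin \<phi>\<bar> < 1"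
      using \<kappa> abs_mult_sin_le[of \<kappa> \<phi>] by linarith
    then show ?thesis
      unfolding f_def real_powser_def using a
      by (intro summable_LIMSEQ summable_real_powser_bounded)
  qed
  ultimately have
    "(\<lambda>N. integral {s..t} (f N)) \<longlonglongrightarrow> integral {s..t} (\<lambda>\<phi>. real_powser a (\<kappa> * sin \<phi>))"
    unfolding real_norm_def
    by (intro dominated_convergence(2)[where h = "\<lambda>_. 1 / (1 - \<bar>\<kappa>\<bar>)"])
      (auto simp: f_def intro!: integrable_continuous_interval continuous_intros)
  moreover have
    "integral {s..t} (f N) = (\<Sum>k<N. a k * \<kappa> ^ k * integral {s..t} (\<lambda>\<phi>. sin \<phi> ^ k))" for N
    unfolding f_def
    by (subst integral_sum)
      (auto simp: power_mult_distrib mult.assoc intro!: integrable_continuous_interval continuous_intros)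
  ultimately show ?thesis
    by (simp add: sums_def)
qed

lemma integral_cos_arcsin_eq_hyp2F1:
  assumes "c \<noteq> 0" and "c\<^sup>2 \<le> 1" and "\<bar>\<kappa>\<bar> < 1"
  shows "integral {-(pi/2)..pi/2}
             (\<lambda>\<phi>. cos (c * arcsin (\<kappa> * sin \<phi>)) / sqrt (1 - (\<kappa> * sin \<phi>)\<^sup>2))
           = pi * hyp2F1 ((1 - c) / 2) ((1 + c) / 2) 1 (\<kappa>\<^sup>2)"
proof -
  define a where "a = cos_arcsin_coeff c"
  define I where "I = integral {-(pi/2)..pi/2} (\<lambda>\<phi>. real_powser a (\<kappa> * sin \<phi>))"
  have "\<bar>\<kappa> * sin \<phi>\<bar> < 1" for \<phi>
    using assms(3) abs_mult_sin_le[of \<kappa> \<phi>] by linarith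
  then have integrand: "cos (c * arcsin (\<kappa> * sin \<phi>)) / sqrt (1 - (\<kappa> * sin \<phi>)\<^sup>2)
      = real_powser a (\<kappa> * sin \<phi>)" for \<phi>
    unfolding a_def using assms(1,2) by (simp add: cos_arcsin_powser)
  have "(\<lambda>k. a k * \<kappa> ^ k * integral {-(pi/2)..pi/2} (\<lambda>\<phi>. sin \<phi> ^ k)) sums I"
    unfolding I_def a_def using cos_arcsin_coeff_bounds[OF assms(2)] assms(3)
    by (intro integral_real_powser_sin_sums) auto
  moreover have "a k = 0" if "k \<notin> range (\<lambda>n. 2 * n)" for k
  proof -
    from that obtain m where "k = Suc (2 * m)"
      by (metis evenE oddE rangeI Suc_eq_plus1)
    then show ?thesis
      by (simp add: a_def cos_arcsin_coeff_odd)
  qed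
  ultimately have
    "(\<lambda>n. a (2 * n) * \<kappa> ^ (2 * n) * integral {-(pi/2)..pi/2} (\<lambda>\<phi>. sin \<phi> ^ (2 * n))) sums I"
    by (subst sums_mono_reindex) (auto simp: strict_mono_def)
  moreover have "a (2 * n) * \<kappa> ^ (2 * n) * integral {-(pi/2)..pi/2} (\<lambda>\<phi>. sin \<phi> ^ (2 * n))
      = pi * (pochhammer ((1 - c) / 2) n * pochhammer ((1 + c) / 2) n
               / (pochhammer 1 n * fact n) * (\<kappa>\<^sup>2) ^ n)" for n
  proof -
    have "\<kappa> ^ (2 * n) = (\<kappa>\<^sup>2) ^ n" by (simp add: power_mult)
    moreover have "pochhammer (1/2) n > (0::real)" by (simp add: pochhammer_pos)
    ultimately show ?thesis
      unfolding a_def cos_arcsin_coeff_even integral_sin_power_even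
      by (simp add: pochhammer_fact field_simps)
  qed
  ultimately have "(\<lambda>n. pi * (pochhammer ((1 - c) / 2) n * pochhammer ((1 + c) / 2) n
      / (pochhammer 1 n * fact n) * (\<kappa>\<^sup>2) ^ n)) sums (pi * (I / pi))"
    by simp
  then have "hyp2F1 ((1 - c) / 2) ((1 + c) / 2) 1 (\<kappa>\<^sup>2) = I / pi"
    unfolding hyp2F1_def by (simp only: sums_mult_iff pi_neq_zero sums_unique[symmetric] not_False_eq_True)
  then show ?thesis
    unfolding I_def integrand by simp
qed

lemma integral_odd_function_symmetric:
  fixes f :: "real \<Rightarrow> real"
  assumes "\<And>x. f (- x) = - f x"
  shows "integral {-a..a} f = 0"
proof -
  have "integral {-a..a} f = integral {-a..a} (\<lambda>x. f (- x))"
    using Henstock_Kurzweil_Integration.integral_reflect_real[of a "-a" f] by simp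
  also have "\<dots> = - integral {-a..a} f"
    by (simp add: assms integral_neg)
  finally show ?thesis by simp
qed

lemma cheb6_cos: "cheb6 (cos t) = cos (6 * t)"
proof -
  have "cos (6 * t) = 2 * cos (3 * t) ^ 2 - 1"
    using cos_double_cos[of "3 * t"] by simp
  also have "\<dots> = cheb6 (cos t)"
    unfolding cos_treble_cos cheb6_def by (simp add: eval_nat_numeral algebra_simps)
  finally show ?thesis by simp
qed

locale cheb6_substitution =
  fixes \<alpha> \<kappa> :: real
  assumes alpha_pos: "0 < \<alpha>" and alpha_less: "\<alpha> < pi / 2" and kappa_eq: "\<kappa> = sin \<alpha>"
begin

definition theta :: "real \<Rightarrow> real" where
  "theta \<phi> = arcsin (\<kappa> * sin \<phi>)"

definition subst :: "real \<Rightarrow> real" where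
  "subst \<phi> = cos ((pi - theta \<phi>) / 3)"

definition subst' :: "real \<Rightarrow> real" where
  "subst' \<phi> = sin ((pi - theta \<phi>) / 3) * (\<kappa> * cos \<phi> / sqrt (1 - (\<kappa> * sin \<phi>)\<^sup>2)) / 3"

definition integrand :: "real \<Rightarrow> real" where
  "integrand x = 1 / sqrt (cheb6 x - cos (2 * \<alpha>))"

definition pullback :: "real \<Rightarrow> real" where
  "pullback \<phi> = sin ((pi - theta \<phi>) / 3) / (3 * sqrt 2 * sqrt (1 - (\<kappa> * sin \<phi>)\<^sup>2))"

lemma kappa_pos: "0 < \<kappa>"
  using alpha_pos alpha_less by (simp add: kappa_eq sin_gt_zero)

lemma kappa_less_one: "\<kappa> < 1"
  using alpha_pos alpha_less sin_monotone_2pi[of \<alpha> "pi/2"] by (simp add: kappa_eq)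

lemma arcsin_kappa: "arcsin \<kappa> = \<alpha>"
  using alpha_pos alpha_less by (simp add: kappa_eq arcsin_sin)

lemma abs_kappa_sin_less_one: "\<bar>\<kappa> * sin \<phi>\<bar> < 1"
  using abs_mult_sin_le[of \<kappa> \<phi>] kappa_pos kappa_less_one by linarith

lemma one_minus_kappa_sin_squared_pos: "0 < 1 - (\<kappa> * sin \<phi>)\<^sup>2"
  using abs_kappa_sin_less_one by (simp add: abs_square_less_1)

lemma sin_theta: "sin (theta \<phi>) = \<kappa> * sin \<phi>"
  unfolding theta_def using abs_kappa_sin_less_one[of \<phi>] by (intro sin_arcsin) auto

lemma theta_minus: "theta (- \<phi>) = - theta \<phi>"
  using abs_kappa_sin_less_one[of \<phi>] by (simp add: theta_def arcsin_minus abs_less_iff)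

lemma abs_theta_le: "\<bar>theta \<phi>\<bar> \<le> \<alpha>"
proof -
  have bounds: "-\<kappa> \<le> \<kappa> * sin \<phi>" "\<kappa> * sin \<phi> \<le> \<kappa>"
    using abs_mult_sin_le[of \<kappa> \<phi>] kappa_pos by auto
  have "arcsin (-\<kappa>) \<le> theta \<phi>" "theta \<phi> \<le> arcsin \<kappa>"
    unfolding theta_def using bounds kappa_less_one by (intro arcsin_le_arcsin; simp)+
  moreover have "arcsin (-\<kappa>) = - \<alpha>"
    using kappa_pos kappa_less_one by (simp add: arcsin_minus arcsin_kappa)
  ultimately show ?thesis
    by (simp add: arcsin_kappa)
qed

lemma isCont_theta: "isCont theta \<phi>"
  unfolding theta_def[abs_def] using abs_kappa_sin_less_one[of \<phi>]
  by (intro isCont_o2[OF _ isCont_arcsin] continuous_intros) (auto simp: abs_less_iff)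

lemma cheb6_subst: "cheb6 (subst \<phi>) - cos (2 * \<alpha>) = 2 * \<kappa>\<^sup>2 * (cos \<phi>)\<^sup>2"
proof -
  have "cheb6 (subst \<phi>) = cos (2 * pi - 2 * theta \<phi>)"
    unfolding subst_def cheb6_cos by (intro arg_cong[where f = cos]) (simp add: field_simps)
  also have "\<dots> = 1 - 2 * (\<kappa> * sin \<phi>)\<^sup>2"
    by (simp add: cos_diff cos_double_sin sin_theta)
  finally have "cheb6 (subst \<phi>) = 1 - 2 * (\<kappa> * sin \<phi>)\<^sup>2" .
  moreover have "cos (2 * \<alpha>) = 1 - 2 * \<kappa>\<^sup>2"
    by (simp add: kappa_eq cos_double_sin)
  ultimately show ?thesis
    by (simp add: cos_squared_eq power_mult_distrib algebra_simps)
qed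

lemma subst_endpoints: "subst (-(pi/2)) = cos ((pi + \<alpha>) / 3)" "subst (pi/2) = cos ((pi - \<alpha>) / 3)"
  using kappa_pos kappa_less_one by (simp_all add: subst_def theta_def arcsin_minus arcsin_kappa)

lemma has_real_derivative_subst: "(subst has_real_derivative subst' \<phi>) (at \<phi>)"
  unfolding subst_def[abs_def] subst'_def theta_def
  using abs_kappa_sin_less_one[of \<phi>] one_minus_kappa_sin_squared_pos[of \<phi>]
  by (auto intro!: derivative_eq_intros simp: abs_less_iff field_simps)

lemma isCont_subst': "isCont subst' \<phi>"
  unfolding subst'_def[abs_def] using one_minus_kappa_sin_squared_pos[of \<phi>]
  by (auto intro!: continuous_intros isCont_theta)

lemma subst'_nonneg: "\<bar>\<phi>\<bar> \<le> pi / 2 \<Longrightarrow> 0 \<le> subst' \<phi>"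
  unfolding subst'_def using abs_theta_le[of \<phi>] alpha_less kappa_pos one_minus_kappa_sin_squared_pos[of \<phi>]
  by (auto intro!: mult_nonneg_nonneg divide_nonneg_pos sin_ge_zero cos_ge_zero simp: abs_le_iff)

lemma isCont_integrand_subst:
  assumes "\<bar>\<phi>\<bar> < pi / 2"
  shows "isCont integrand (subst \<phi>)"
proof -
  have "0 < cos \<phi>"
    using assms by (intro cos_gt_zero_pi) (auto simp: abs_less_iff)
  then have "0 < cheb6 (subst \<phi>) - cos (2 * \<alpha>)"
    unfolding cheb6_subst using kappa_pos by simp
  then show ?thesis
    unfolding integrand_def[abs_def] cheb6_def by (auto intro!: continuous_intros)
qed

lemma integrand_subst_mult:
  "\<bar>\<phi>\<bar> < pi / 2 \<Longrightarrow> integrand (subst \<phi>) * subst' \<phi> = pullback \<phi>"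
proof -
  assume "\<bar>\<phi>\<bar> < pi / 2"
  then have cos_pos: "0 < cos \<phi>"
    by (intro cos_gt_zero_pi) (auto simp: abs_less_iff)
  then have "sqrt (cheb6 (subst \<phi>) - cos (2 * \<alpha>)) = sqrt 2 * \<kappa> * cos \<phi>"
    unfolding cheb6_subst using kappa_pos by (simp add: real_sqrt_mult)
  then show ?thesis
    using cos_pos kappa_pos unfolding integrand_def subst'_def pullback_def by (simp add: field_simps)
qed

lemma continuous_on_pullback: "continuous_on A pullback"
proof (intro continuous_at_imp_continuous_on ballI)
  fix \<phi>
  show "isCont pullback \<phi>"
    unfolding pullback_def[abs_def] using one_minus_kappa_sin_squared_pos[of \<phi>]
    by (auto intro!: continuous_intros isCont_theta)
qed

lemma set_integrable_pullback: "set_integrable lborel {-(pi/2)..pi/2} pullback"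
  unfolding set_integrable_def by (rule borel_integrable_compact) (auto intro: continuous_on_pullback)

lemma
  shows set_integrable_integrand:
      "set_integrable lborel {cos ((pi + \<alpha>) / 3) .. cos ((pi - \<alpha>) / 3)} integrand"
    and LBINT_integrand_eq_integral_pullback:
      "(LBINT x = cos ((pi + \<alpha>) / 3) .. cos ((pi - \<alpha>) / 3). integrand x)
         = integral {-(pi/2)..pi/2} pullback"
proof -
  have "set_integrable lborel {-(pi/2)<..<pi/2} pullback"
    by (rule set_integrable_subset[OF set_integrable_pullback]) auto
  then have integrable: "set_integrable lborel (einterval (-(pi/2)) (pi/2))
      (\<lambda>\<phi>. integrand (subst \<phi>) * subst' \<phi>)"
    by (rule set_integrable_cong[THEN iffD1, rotated -1]) (auto simp: integrand_subst_mult abs_less_iff)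
  have limits:
    "((ereal \<circ> subst \<circ> real_of_ereal) \<longlongrightarrow> ereal (cos ((pi + \<alpha>) / 3))) (at_right (ereal (-(pi/2))))"
    "((ereal \<circ> subst \<circ> real_of_ereal) \<longlongrightarrow> ereal (cos ((pi - \<alpha>) / 3))) (at_left (ereal (pi/2)))"
    unfolding ereal_tendsto_simps1 ereal_tendsto_simps2 subst_endpoints(1,2)[symmetric]
    using DERIV_isCont[OF has_real_derivative_subst]
    by (auto simp: isCont_def intro: tendsto_mono[OF at_le])
  have hyps: "ereal (-(pi/2)) < ereal (pi/2)"
    "\<And>x. ereal (-(pi/2)) < ereal x \<Longrightarrow> ereal x < ereal (pi/2) \<Longrightarrow> DERIV subst x :> subst' x"
    "\<And>x. ereal (-(pi/2)) < ereal x \<Longrightarrow> ereal x < ereal (pi/2) \<Longrightarrow> isCont integrand (subst x)"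
    "\<And>x. ereal (-(pi/2)) < ereal x \<Longrightarrow> ereal x < ereal (pi/2) \<Longrightarrow> isCont subst' x"
    "\<And>x. ereal (-(pi/2)) < ereal x \<Longrightarrow> ereal x < ereal (pi/2) \<Longrightarrow> 0 \<le> integrand (subst x)"
    "\<And>x. ereal (-(pi/2)) \<le> ereal x \<Longrightarrow> ereal x \<le> ereal (pi/2) \<Longrightarrow> 0 \<le> subst' x"
    by (auto intro: has_real_derivative_subst isCont_integrand_subst isCont_subst' subst'_nonneg
        simp: abs_less_iff abs_le_iff integrand_def cheb6_subst)
  note substitution = interval_integral_substitution_nonneg[OF hyps limits integrable]
  have "set_integrable lborel {cos ((pi + \<alpha>) / 3) <..< cos ((pi - \<alpha>) / 3)} integrand"
    using substitution(1) by simp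
  moreover have "set_integrable lborel {cos ((pi + \<alpha>) / 3) <..< cos ((pi - \<alpha>) / 3)} integrand
      \<longleftrightarrow> set_integrable lborel {cos ((pi + \<alpha>) / 3) .. cos ((pi - \<alpha>) / 3)} integrand"
    by (rule set_integrable_discrete_difference[where X = "{cos ((pi + \<alpha>) / 3), cos ((pi - \<alpha>) / 3)}"])
      auto
  ultimately show "set_integrable lborel {cos ((pi + \<alpha>) / 3) .. cos ((pi - \<alpha>) / 3)} integrand"
    by simp
  have "(LBINT x = cos ((pi + \<alpha>) / 3) .. cos ((pi - \<alpha>) / 3). integrand x)
      = (LBINT \<phi> = -(pi/2) .. pi/2. integrand (subst \<phi>) * subst' \<phi>)"
    using substitution(2) by simp
  also have "\<dots> = (LBINT \<phi> = -(pi/2) .. pi/2. pullback \<phi>)"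
    by (rule interval_integral_cong) (auto simp: integrand_subst_mult abs_less_iff)
  also have "\<dots> = integral {-(pi/2)..pi/2} pullback"
    by (rule interval_integral_eq_integral) (auto intro: set_integrable_pullback)
  finally show "(LBINT x = cos ((pi + \<alpha>) / 3) .. cos ((pi - \<alpha>) / 3). integrand x)
      = integral {-(pi/2)..pi/2} pullback" .
qed

lemma integral_pullback:
  "integral {-(pi/2)..pi/2} pullback = sqrt 3 / (6 * sqrt 2) * (pi * hyp2F1 (1/3) (2/3) 1 (\<kappa>\<^sup>2))"
proof -
  define even_part where "even_part \<phi> = cos (theta \<phi> / 3) / sqrt (1 - (\<kappa> * sin \<phi>)\<^sup>2)" for \<phi>
  define odd_part where "odd_part \<phi> = sin (theta \<phi> / 3) / sqrt (1 - (\<kappa> * sin \<phi>)\<^sup>2)" for \<phi>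
  have split: "pullback = (\<lambda>\<phi>. sqrt 3 / (6 * sqrt 2) * even_part \<phi> - 1 / (6 * sqrt 2) * odd_part \<phi>)"
  proof
    fix \<phi>
    have "sin ((pi - theta \<phi>) / 3) = sqrt 3 / 2 * cos (theta \<phi> / 3) - 1 / 2 * sin (theta \<phi> / 3)"
      using sin_diff[of "pi / 3" "theta \<phi> / 3"] by (simp add: sin_60 cos_60 diff_divide_distrib)
    then show "pullback \<phi> = sqrt 3 / (6 * sqrt 2) * even_part \<phi> - 1 / (6 * sqrt 2) * odd_part \<phi>"
      unfolding pullback_def even_part_def odd_part_def
      using one_minus_kappa_sin_squared_pos[of \<phi>] by (simp add: field_simps)
  qed
  have "isCont even_part \<phi>" "isCont odd_part \<phi>" for \<phi>
    unfolding even_part_def[abs_def] odd_part_def[abs_def] using one_minus_kappa_sin_squared_pos[of \<phi>]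
    by (auto intro!: continuous_intros isCont_theta)
  then have "integral {-(pi/2)..pi/2} pullback
      = sqrt 3 / (6 * sqrt 2) * integral {-(pi/2)..pi/2} even_part
        - 1 / (6 * sqrt 2) * integral {-(pi/2)..pi/2} odd_part"
    unfolding split
    by (simp add: integral_diff integrable_on_cmult_left integrable_continuous_interval
        continuous_at_imp_continuous_on)
  moreover have "integral {-(pi/2)..pi/2} odd_part = 0"
    by (rule integral_odd_function_symmetric) (simp add: odd_part_def theta_minus)
  moreover have "integral {-(pi/2)..pi/2} even_part = pi * hyp2F1 (1/3) (2/3) 1 (\<kappa>\<^sup>2)"
    using integral_cos_arcsin_eq_hyp2F1[of "1/3" \<kappa>] kappa_pos kappa_less_one
    by (simp add: even_part_def[abs_def] theta_def power_divide)
  ultimately show ?thesis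
    by simp
qed

end

theorem theorem4:
  fixes \<alpha> \<kappa> :: real
  assumes "0 < \<alpha>" and "\<alpha> < pi / 2"
    and "\<kappa> = sin \<alpha>"
  shows "set_integrable lborel {cos ((pi + \<alpha>) / 3) .. cos ((pi - \<alpha>) / 3)}
           (\<lambda>x. 1 / sqrt (cheb6 x - cos (2 * \<alpha>)))
       \<and> pi / 2 * hyp2F1 (1/3) (2/3) 1 (\<kappa>\<^sup>2) =
         sqrt 6 * (LBINT x = cos ((pi + \<alpha>) / 3) .. cos ((pi - \<alpha>) / 3).
                     1 / sqrt (cheb6 x - cos (2 * \<alpha>)))"
proof -
  interpret cheb6_substitution \<alpha> \<kappa>
    using assms by unfold_locales
  have "sqrt 6 = sqrt 2 * sqrt 3"
    by (simp flip: real_sqrt_mult)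
  then have "sqrt 6 * (LBINT x = cos ((pi + \<alpha>) / 3) .. cos ((pi - \<alpha>) / 3). integrand x)
      = pi / 2 * hyp2F1 (1/3) (2/3) 1 (\<kappa>\<^sup>2)"
    unfolding LBINT_integrand_eq_integral_pullback integral_pullback by simp
  with set_integrable_integrand show ?thesis
    unfolding integrand_def by simp
qed

end
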